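(* The greedy forward search algorithm with criterion $\widehat G_\infty$ outputs a cross-group ordering $g$ with $$\Delta\mathrm{xAUC}(g)\le\max\Big(\frac{1}{n_1^a},\frac{1}{n_1^b}\Big).$$
   Context: Setting: two disjoint finite groups $a$, $b$ of samples, each sample $u$ having label $Y_u\in\{0,1\}$; $n^a,n^b$ group sizes, $n_1^a,n_0^a$ numbers of label-1/label-0 samples in $a$ (similarly for $b$), all $\ge1$, $k_{a,b}=n_1^an_0^b$, $k_{b,a}=n_0^an_1^b$. Fixed within-group rankings $\mathrm{p}^a=(\mathrm{p}^{a(1)},\dots,\mathrm{p}^{a(n^a)})$, $\mathrm{p}^b=(\mathrm{p}^{b(1)},\dots,\mathrm{p}^{b(n^b)})$. A cross-group ordering is a ranked list of all samples of $a\cup b$ whose restrictions to $a,b$ are $\mathrm{p}^a,\mathrm{p}^b$; $\mathrm{xAUC}_o(a,b)$ is the fraction of pairs (label-1 sample of $a$, label-0 sample of $b$) in which the first is ranked above the second, $\mathrm{xAUC}_o(b,a)$ symmetrically, $\Delta\mathrm{xAUC}(o)=|\mathrm{xAUC}_o(a,b)-\mathrm{xAUC}_o(b,a)|$. An $(i,j)$-partial ordering ($0\le i\le n^a$, $0\le j\le n^b$) is a ranked list of $\mathrm{p}^{a(1)},\dots,\mathrm{p}^{a(i)},\mathrm{p}^{b(1)},\dots,\mathrm{p}^{b(j)}$ preserving within-group orders. $H_{ab}(o)$ = number of pairs $(k,h)$ with $k\le i$, $h\le n^b$, $Y_{\mathrm{p}^{a(k)}}=1$, $Y_{\mathrm{p}^{b(h)}}=0$,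 and either $h>j$ or ($h\le j$ and $\mathrm{p}^{a(k)}$ precedes $\mathrm{p}^{b(h)}$ in $o$); $H_{ba}(o)$ = number of pairs $(h,k)$ with $h\le j$, $k\le n^a$, $Y_{\mathrm{p}^{b(h)}}=1$, $Y_{\mathrm{p}^{a(k)}}=0$, and either $k>i$ or ($k\le i$ and $\mathrm{p}^{b(h)}$ precedes $\mathrm{p}^{a(k)}$ in $o$). $\widehat G_\infty(o)=-|H_{ab}(o)/k_{a,b}-H_{ba}(o)/k_{b,a}|$; for a full ordering it equals $-\Delta\mathrm{xAUC}(o)$. Greedy forward search: start from the empty $(0,0)$-partial ordering $g$. While $g$ is an $(i,j)$-partial ordering with $(i,j)\ne(n^a,n^b)$: if $i<n^a$ and $j<n^b$, replace $g$ by $g\oplus\mathrm{p}^{a(i+1)}$ if $\widehat G_\infty(g\oplus\mathrm{p}^{a(i+1)})\ge\widehat G_\infty(g\oplus\mathrm{p}^{b(j+1)})$ and by $g\oplus\mathrm{p}^{b(j+1)}$ otherwise; if one group is exhausted, append the next element of the other group ($\oplus$ = append at the bottom). Output the final $g$. *)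

theory Defs
  imports Main HOL.Real
begin

text \<open>Group a is given by its within-group ranking
  pa (a list of distinct samples, top first), group b by pb.
  Orderings (partial or full) are lists of samples, top first.\<close>

definition precedes :: "'u list \<Rightarrow> 'u \<Rightarrow> 'u \<Rightarrow> bool" where
  "precedes r u v \<longleftrightarrow> (\<exists>k l. k < l \<and> l < length r \<and> r ! k = u \<and> r ! l = v)"

definition n1 :: "('u \<Rightarrow> nat) \<Rightarrow> 'u list \<Rightarrow> nat" where
  "n1 Y p = card {u \<in> set p. Y u = 1}"

definition n0 :: "('u \<Rightarrow> nat) \<Rightarrow> 'u list \<Rightarrow> nat" where
  "n0 Y p = card {u \<in> set p. Y u = 0}"

definition is_partial_ordering :: "'u list \<Rightarrow> 'u list \<Rightarrow> nat \<Rightarrow> nat \<Rightarrow> 'u list \<Rightarrow> bool" where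
  "is_partial_ordering pa pb i j r \<longleftrightarrow>
     distinct r \<and> set r = set (take i pa) \<union> set (take j pb) \<and>
     filter (\<lambda>u. u \<in> set pa) r = take i pa \<and> filter (\<lambda>u. u \<in> set pb) r = take j pb"

definition is_cross_ordering :: "'u list \<Rightarrow> 'u list \<Rightarrow> 'u list \<Rightarrow> bool" where
  "is_cross_ordering pa pb r \<longleftrightarrow> is_partial_ordering pa pb (length pa) (length pb) r"

definition xAUC :: "('u \<Rightarrow> nat) \<Rightarrow> 'u list \<Rightarrow> 'u list \<Rightarrow> 'u list \<Rightarrow> real" where
  "xAUC Y p q r =
     real (card {(u, v). u \<in> set p \<and> Y u = 1 \<and> v \<in> set q \<and> Y v = 0 \<and> precedes r u v})
     / real (n1 Y p * n0 Y q)"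

definition delta_xAUC :: "('u \<Rightarrow> nat) \<Rightarrow> 'u list \<Rightarrow> 'u list \<Rightarrow> 'u list \<Rightarrow> real" where
  "delta_xAUC Y pa pb r = \<bar>xAUC Y pa pb r - xAUC Y pb pa r\<bar>"

text \<open>H_{ab} of an (i,j)-partial ordering (indices 0-based: k < i means among the first i).\<close>
definition H_ab :: "('u \<Rightarrow> nat) \<Rightarrow> 'u list \<Rightarrow> 'u list \<Rightarrow> nat \<Rightarrow> nat \<Rightarrow> 'u list \<Rightarrow> nat" where
  "H_ab Y pa pb i j r = card {(k, h). k < i \<and> h < length pb \<and> Y (pa ! k) = 1 \<and> Y (pb ! h) = 0 \<and>
       (j \<le> h \<or> (h < j \<and> precedes r (pa ! k) (pb ! h)))}"

definition H_ba :: "('u \<Rightarrow> nat) \<Rightarrow> 'u list \<Rightarrow> 'u list \<Rightarrow> nat \<Rightarrow> nat \<Rightarrow> 'u list \<Rightarrow> nat" where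
  "H_ba Y pa pb i j r = card {(h, k). h < j \<and> k < length pa \<and> Y (pb ! h) = 1 \<and> Y (pa ! k) = 0 \<and>
       (i \<le> k \<or> (k < i \<and> precedes r (pb ! h) (pa ! k)))}"

definition G_inf :: "('u \<Rightarrow> nat) \<Rightarrow> 'u list \<Rightarrow> 'u list \<Rightarrow> nat \<Rightarrow> nat \<Rightarrow> 'u list \<Rightarrow> real" where
  "G_inf Y pa pb i j r =
     - \<bar>real (H_ab Y pa pb i j r) / real (n1 Y pa * n0 Y pb)
        - real (H_ba Y pa pb i j r) / real (n0 Y pa * n1 Y pb)\<bar>"

definition greedy_step :: "('u \<Rightarrow> nat) \<Rightarrow> 'u list \<Rightarrow> 'u list \<Rightarrow> 'u list \<times> nat \<times> nat \<Rightarrow> 'u list \<times> nat \<times> nat" where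
  "greedy_step Y pa pb s = (case s of (g, i, j) \<Rightarrow>
     if i < length pa \<and> j < length pb then
       (if G_inf Y pa pb (i + 1) j (g @ [pa ! i]) \<ge> G_inf Y pa pb i (j + 1) (g @ [pb ! j])
        then (g @ [pa ! i], i + 1, j) else (g @ [pb ! j], i, j + 1))
     else if i < length pa then (g @ [pa ! i], i + 1, j)
     else if j < length pb then (g @ [pb ! j], i, j + 1)
     else (g, i, j))"

text \<open>Each non-final step increases i+j by one, so after length pa + length pb steps the
  loop has terminated at (n^a, n^b); further steps are no-ops.\<close>
definition greedy_output :: "('u \<Rightarrow> nat) \<Rightarrow> 'u list \<Rightarrow> 'u list \<Rightarrow> 'u list" where
  "greedy_output Y pa pb = fst ((greedy_step Y pa pb ^^ (length pa + length pb)) ([], 0, 0))"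

end

theory Submission
  imports Defs
begin

text \<open>Write \<open>D = H_ab/k_ab - H_ba/k_ba\<close> (\<open>xAUC_gap\<close> below), so that \<open>G_inf = -\<bar>D\<bar>\<close>.
  Appending the next sample of group a adds only pairs formed with label-0 samples of b not yet
  placed, so it raises \<open>D\<close> by at most \<open>n0 b / k_ab = 1 / n1 a\<close>; symmetrically, appending the next
  sample of b lowers \<open>D\<close> by at most \<open>1 / n1 b\<close>; once one group is exhausted, appending from the
  other leaves \<open>D\<close> unchanged. So if \<open>\<bar>D\<bar> \<le> M = max (1 / n1 a) (1 / n1 b)\<close>, one of the two moves
  (upwards when \<open>D < 0\<close>, downwards otherwise) keeps \<open>\<bar>D\<bar> \<le> M\<close>, hence so does the greedy move,
  which minimises \<open>\<bar>D\<bar>\<close>. For a full ordering \<open>\<bar>D\<bar>\<close> is the xAUC disparity.\<close>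

lemma precedes_snoc: "precedes (g @ [x]) u v \<longleftrightarrow> precedes g u v \<or> (v = x \<and> u \<in> set g)"
proof
  assume "precedes (g @ [x]) u v"
  then obtain k l where kl: "k < l" "l \<le> length g" "(g @ [x]) ! k = u" "(g @ [x]) ! l = v"
    unfolding precedes_def by auto
  show "precedes g u v \<or> (v = x \<and> u \<in> set g)"
  proof (cases "l = length g")
    case True
    then show ?thesis using kl by (auto simp: nth_append)
  next
    case False
    then have "k < l \<and> l < length g \<and> g ! k = u \<and> g ! l = v" using kl by (simp add: nth_append)
    then show ?thesis unfolding precedes_def by blast
  qed
next
  assume "precedes g u v \<or> (v = x \<and> u \<in> set g)"
  then show "precedes (g @ [x]) u v"
  proof
    assume "precedes g u v"
    then obtain k l where "k < l" "l < length g" "g ! k = u" "g ! l = v"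
      unfolding precedes_def by blast
    then show ?thesis unfolding precedes_def
      by (intro exI[of _ k] exI[of _ l]) (simp add: nth_append)
  next
    assume "v = x \<and> u \<in> set g"
    then obtain k where "k < length g" "g ! k = u" "v = x" by (auto simp: in_set_conv_nth)
    then show ?thesis unfolding precedes_def
      by (intro exI[of _ k] exI[of _ "length g"]) (simp add: nth_append)
  qed
qed

lemma precedes_set: "precedes r u v \<Longrightarrow> u \<in> set r"
  unfolding precedes_def by auto

lemma H_ab_snoc_own:
  assumes "pa ! i \<notin> set g" and "pa ! i \<notin> set pb"
  shows "H_ab Y pa pb (i + 1) j (g @ [pa ! i]) =
    H_ab Y pa pb i j g + card {h. j \<le> h \<and> h < length pb \<and> Y (pa ! i) = 1 \<and> Y (pb ! h) = 0}"
proof -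
  let ?new = "{h. j \<le> h \<and> h < length pb \<and> Y (pa ! i) = 1 \<and> Y (pb ! h) = 0}"
  let ?old = "{(k, h). k < i \<and> h < length pb \<and> Y (pa ! k) = 1 \<and> Y (pb ! h) = 0 \<and>
       (j \<le> h \<or> (h < j \<and> precedes g (pa ! k) (pb ! h)))}"
  have ne: "pb ! h \<noteq> pa ! i" if "h < length pb" for h
    using assms(2) that nth_mem by metis
  have "{(k, h). k < i + 1 \<and> h < length pb \<and> Y (pa ! k) = 1 \<and> Y (pb ! h) = 0 \<and>
       (j \<le> h \<or> (h < j \<and> precedes (g @ [pa ! i]) (pa ! k) (pb ! h)))} = ?old \<union> Pair i ` ?new"
    using assms(1) ne by (auto simp: precedes_snoc less_Suc_eq dest: precedes_set)
  moreover have "card (?old \<union> Pair i ` ?new) = card ?old + card ?new"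
  proof -
    have "finite ?old"
      by (rule finite_subset[of _ "{..<i} \<times> {..<length pb}"]) auto
    moreover have "?old \<inter> Pair i ` ?new = {}" by auto
    ultimately show ?thesis by (simp add: card_Un_disjoint card_image inj_on_def)
  qed
  ultimately show ?thesis
    unfolding H_ab_def by (simp only:)
qed

lemma H_ab_snoc_other:
  assumes "i \<le> length pa" and "set (take i pa) \<subseteq> set g" and "distinct pb" and "j < length pb"
  shows "H_ab Y pa pb i (j + 1) (g @ [pb ! j]) = H_ab Y pa pb i j g"
proof -
  have "pa ! k \<in> set g" if "k < i" for k
  proof -
    have "pa ! k \<in> set (take i pa)"
      using assms(1) that by (simp add: in_set_conv_nth) (metis length_take min.absorb2 nth_take)
    then show ?thesis using assms(2) by blast
  qed
  moreover have "pb ! h \<noteq> pb ! j" if "h < j" for h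
    using assms(3,4) that by (simp add: nth_eq_iff_index_eq)
  ultimately show ?thesis
    unfolding H_ab_def by (intro arg_cong[where f = card]) (auto simp: precedes_snoc; metis Suc_leI le_neq_implies_less)
qed

lemma H_ba_eq_H_ab_swap: "H_ba Y pa pb i j r = H_ab Y pb pa j i r"
  unfolding H_ba_def H_ab_def ..

lemma is_partial_ordering_swap: "is_partial_ordering pa pb i j r \<longleftrightarrow> is_partial_ordering pb pa j i r"
  unfolding is_partial_ordering_def by auto

lemma card_label_indices:
  assumes "distinct p"
  shows "card {h. h < length p \<and> Y (p ! h) = c} = card {u \<in> set p. Y u = c}"
proof -
  have "{u \<in> set p. Y u = c} = nth p ` {h. h < length p \<and> Y (p ! h) = c}"
    by (auto simp: in_set_conv_nth)
  moreover have "inj_on (nth p) {h. h < length p \<and> Y (p ! h) = c}"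
    using assms by (simp add: inj_on_nth)
  ultimately show ?thesis by (simp add: card_image)
qed

lemma divide_mult_le_inverse:
  fixes c m n :: nat
  assumes "c \<le> n"
  shows "real c / real (m * n) \<le> 1 / real m"
proof (cases "m = 0 \<or> n = 0")
  case True
  then show ?thesis using assms by auto
next
  case False
  then have "real c / real (m * n) \<le> real n / real (m * n)"
    using assms by (intro divide_right_mono) auto
  also have "\<dots> = 1 / real m" using False by simp
  finally show ?thesis .
qed

definition xAUC_gap :: "('u \<Rightarrow> nat) \<Rightarrow> 'u list \<Rightarrow> 'u list \<Rightarrow> nat \<Rightarrow> nat \<Rightarrow> 'u list \<Rightarrow> real" where
  "xAUC_gap Y pa pb i j r =
     real (H_ab Y pa pb i j r) / real (n1 Y pa * n0 Y pb)
     - real (H_ba Y pa pb i j r) / real (n0 Y pa * n1 Y pb)"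

lemma G_inf_eq_abs_xAUC_gap: "G_inf Y pa pb i j r = - \<bar>xAUC_gap Y pa pb i j r\<bar>"
  unfolding G_inf_def xAUC_gap_def ..

lemma xAUC_gap_swap: "xAUC_gap Y pb pa j i r = - xAUC_gap Y pa pb i j r"
  unfolding xAUC_gap_def H_ba_eq_H_ab_swap by (simp add: mult.commute)

lemma min_abs_le_if_straddle:
  fixes d m x y :: real
  assumes "\<bar>d\<bar> \<le> m" and "d \<le> x" "x \<le> d + m" and "d - m \<le> y" "y \<le> d"
  shows "min \<bar>x\<bar> \<bar>y\<bar> \<le> m"
  using assms by (cases "d \<ge> 0") auto

locale disjoint_rankings =
  fixes pa pb :: "'u list"
  assumes distinct_pa: "distinct pa" and distinct_pb: "distinct pb"
    and disjoint: "set pa \<inter> set pb = {}"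
begin

lemma swap: "disjoint_rankings pb pa"
  using distinct_pa distinct_pb disjoint by unfold_locales auto

lemma partial_ordering_snoc_own:
  assumes "is_partial_ordering pa pb i j g" and "i < length pa"
  shows "pa ! i \<notin> set g" and "is_partial_ordering pa pb (i + 1) j (g @ [pa ! i])"
proof -
  have not_b: "pa ! i \<notin> set pb" using disjoint assms(2) nth_mem by blast
  have "pa ! i \<notin> set (take i pa)"
    using distinct_pa assms(2) by (simp add: in_set_conv_nth nth_eq_iff_index_eq)
  with not_b show new: "pa ! i \<notin> set g"
    using assms(1) in_set_takeD unfolding is_partial_ordering_def by fastforce
  have "take (i + 1) pa = take i pa @ [pa ! i]"
    using assms(2) by (simp add: take_Suc_conv_app_nth)
  then show "is_partial_ordering pa pb (i + 1) j (g @ [pa ! i])"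
    using assms new not_b unfolding is_partial_ordering_def by auto
qed

lemma partial_ordering_snoc_other:
  assumes "is_partial_ordering pa pb i j g" and "j < length pb"
  shows "is_partial_ordering pa pb i (j + 1) (g @ [pb ! j])"
  using disjoint_rankings.partial_ordering_snoc_own(2)[OF swap] assms is_partial_ordering_swap by blast

lemma xAUC_gap_snoc_own:
  assumes po: "is_partial_ordering pa pb i j g" and i: "i < length pa" and j: "j \<le> length pb"
  defines "g' \<equiv> g @ [pa ! i]"
  shows "xAUC_gap Y pa pb i j g \<le> xAUC_gap Y pa pb (i + 1) j g'"
    and "xAUC_gap Y pa pb (i + 1) j g' \<le> xAUC_gap Y pa pb i j g + 1 / real (n1 Y pa)"
    and "j = length pb \<Longrightarrow> xAUC_gap Y pa pb (i + 1) j g' = xAUC_gap Y pa pb i j g"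
proof -
  define C where "C = {h. j \<le> h \<and> h < length pb \<and> Y (pa ! i) = 1 \<and> Y (pb ! h) = 0}"
  have "pa ! i \<notin> set pb" using disjoint i nth_mem by blast
  then have H_ab_step: "H_ab Y pa pb (i + 1) j g' = H_ab Y pa pb i j g + card C"
    unfolding g'_def C_def by (rule H_ab_snoc_own[OF partial_ordering_snoc_own(1)[OF po i]])
  have "set (take j pb) \<subseteq> set g" using po unfolding is_partial_ordering_def by auto
  then have H_ba_step: "H_ba Y pa pb (i + 1) j g' = H_ba Y pa pb i j g"
    unfolding g'_def H_ba_eq_H_ab_swap by (rule H_ab_snoc_other[OF j _ distinct_pa i])
  have gap_step: "xAUC_gap Y pa pb (i + 1) j g' =
      xAUC_gap Y pa pb i j g + real (card C) / real (n1 Y pa * n0 Y pb)"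
    unfolding xAUC_gap_def H_ab_step H_ba_step by (simp add: add_divide_distrib)
  have "card C \<le> card {h. h < length pb \<and> Y (pb ! h) = 0}"
    unfolding C_def by (intro card_mono) auto
  also have "\<dots> = n0 Y pb"
    unfolding n0_def using card_label_indices[OF distinct_pb] .
  finally have "real (card C) / real (n1 Y pa * n0 Y pb) \<le> 1 / real (n1 Y pa)"
    by (rule divide_mult_le_inverse)
  then show "xAUC_gap Y pa pb i j g \<le> xAUC_gap Y pa pb (i + 1) j g'"
    and "xAUC_gap Y pa pb (i + 1) j g' \<le> xAUC_gap Y pa pb i j g + 1 / real (n1 Y pa)"
    unfolding gap_step by simp_all
  show "j = length pb \<Longrightarrow> xAUC_gap Y pa pb (i + 1) j g' = xAUC_gap Y pa pb i j g"
    unfolding gap_step C_def by simp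
qed

lemma xAUC_gap_snoc_other:
  assumes po: "is_partial_ordering pa pb i j g" and i: "i \<le> length pa" and j: "j < length pb"
  defines "g' \<equiv> g @ [pb ! j]"
  shows "xAUC_gap Y pa pb i j g - 1 / real (n1 Y pb) \<le> xAUC_gap Y pa pb i (j + 1) g'"
    and "xAUC_gap Y pa pb i (j + 1) g' \<le> xAUC_gap Y pa pb i j g"
    and "i = length pa \<Longrightarrow> xAUC_gap Y pa pb i (j + 1) g' = xAUC_gap Y pa pb i j g"
proof -
  have po': "is_partial_ordering pb pa j i g"
    using po is_partial_ordering_swap by blast
  note own = disjoint_rankings.xAUC_gap_snoc_own[OF swap po' j i, of Y]
  show "xAUC_gap Y pa pb i j g - 1 / real (n1 Y pb) \<le> xAUC_gap Y pa pb i (j + 1) g'"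
    and "xAUC_gap Y pa pb i (j + 1) g' \<le> xAUC_gap Y pa pb i j g"
    and "i = length pa \<Longrightarrow> xAUC_gap Y pa pb i (j + 1) g' = xAUC_gap Y pa pb i j g"
    using own unfolding g'_def xAUC_gap_swap[of Y pb pa] by auto
qed

definition greedy_invariant :: "('u \<Rightarrow> nat) \<Rightarrow> nat \<Rightarrow> 'u list \<times> nat \<times> nat \<Rightarrow> bool" where
  "greedy_invariant Y n s \<longleftrightarrow> (case s of (g, i, j) \<Rightarrow>
     i \<le> length pa \<and> j \<le> length pb \<and> i + j = n \<and> is_partial_ordering pa pb i j g \<and>
     \<bar>xAUC_gap Y pa pb i j g\<bar> \<le> max (1 / real (n1 Y pa)) (1 / real (n1 Y pb)))"

lemma greedy_invariant_step:
  assumes inv: "greedy_invariant Y n (g, i, j)" and n: "n < length pa + length pb"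
  shows "greedy_invariant Y (n + 1) (greedy_step Y pa pb (g, i, j))"
proof -
  define M where "M = max (1 / real (n1 Y pa)) (1 / real (n1 Y pb))"
  define ga where "ga = g @ [pa ! i]"
  define gb where "gb = g @ [pb ! j]"
  have i: "i \<le> length pa" and j: "j \<le> length pb" and n_eq: "i + j = n"
    and po: "is_partial_ordering pa pb i j g" and gap: "\<bar>xAUC_gap Y pa pb i j g\<bar> \<le> M"
    using inv unfolding greedy_invariant_def M_def by auto
  have M_ge: "1 / real (n1 Y pa) \<le> M" "1 / real (n1 Y pb) \<le> M" unfolding M_def by auto
  have step_a: "greedy_invariant Y (n + 1) (ga, i + 1, j)"
    if "i < length pa" and "\<bar>xAUC_gap Y pa pb (i + 1) j ga\<bar> \<le> M"
    using that partial_ordering_snoc_own(2)[OF po] j n_eq unfolding greedy_invariant_def M_def ga_def by auto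
  have step_b: "greedy_invariant Y (n + 1) (gb, i, j + 1)"
    if "j < length pb" and "\<bar>xAUC_gap Y pa pb i (j + 1) gb\<bar> \<le> M"
    using that partial_ordering_snoc_other[OF po] i n_eq unfolding greedy_invariant_def M_def gb_def by auto
  consider (both) "i < length pa" "j < length pb" | (a_only) "i < length pa" "j = length pb"
    | (b_only) "i = length pa" "j < length pb"
    using i j n n_eq by linarith
  then show ?thesis
  proof cases
    case both
    have "min \<bar>xAUC_gap Y pa pb (i + 1) j ga\<bar> \<bar>xAUC_gap Y pa pb i (j + 1) gb\<bar> \<le> M"
      using gap xAUC_gap_snoc_own(1,2)[OF po both(1) j, of Y] xAUC_gap_snoc_other(1,2)[OF po i both(2), of Y] M_ge
      unfolding ga_def gb_def by (intro min_abs_le_if_straddle) auto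
    then show ?thesis
      using both step_a step_b
      unfolding greedy_step_def G_inf_eq_abs_xAUC_gap ga_def gb_def by (auto simp: min_def)
  next
    case a_only
    then show ?thesis
      using step_a gap xAUC_gap_snoc_own(3)[OF po a_only(1) j]
      unfolding greedy_step_def ga_def by simp
  next
    case b_only
    then show ?thesis
      using step_b gap xAUC_gap_snoc_other(3)[OF po i b_only(2)]
      unfolding greedy_step_def gb_def by simp
  qed
qed

lemma greedy_invariant_iterate:
  assumes "n \<le> length pa + length pb"
  shows "greedy_invariant Y n ((greedy_step Y pa pb ^^ n) ([], 0, 0))"
  using assms
proof (induction n)
  case 0
  have "is_partial_ordering pa pb 0 0 []" unfolding is_partial_ordering_def by simp
  moreover have "xAUC_gap Y pa pb 0 0 [] = 0"
    unfolding xAUC_gap_def H_ab_def H_ba_def by simp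
  ultimately show ?case unfolding greedy_invariant_def by (simp add: le_max_iff_disj)
next
  case (Suc n)
  obtain g i j where "(greedy_step Y pa pb ^^ n) ([], 0, 0) = (g, i, j)"
    by (metis prod.exhaust)
  with Suc show ?case using greedy_invariant_step by simp
qed

lemma H_ab_full:
  "H_ab Y pa pb (length pa) (length pb) r =
    card {(u, v). u \<in> set pa \<and> Y u = 1 \<and> v \<in> set pb \<and> Y v = 0 \<and> precedes r u v}"
proof -
  let ?S = "{(k, h). k < length pa \<and> h < length pb \<and> Y (pa ! k) = 1 \<and> Y (pb ! h) = 0 \<and>
       precedes r (pa ! k) (pb ! h)}"
  let ?f = "\<lambda>(k, h). (pa ! k, pb ! h)"
  have inj: "inj_on ?f ?S"
    using distinct_pa distinct_pb by (auto simp: inj_on_def nth_eq_iff_index_eq)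
  have image: "?f ` ?S = {(u, v). u \<in> set pa \<and> Y u = 1 \<and> v \<in> set pb \<and> Y v = 0 \<and> precedes r u v}"
  proof (intro equalityI subsetI)
    fix p assume "p \<in> {(u, v). u \<in> set pa \<and> Y u = 1 \<and> v \<in> set pb \<and> Y v = 0 \<and> precedes r u v}"
    then obtain u v where p: "p = (u, v)" and u: "u \<in> set pa" "Y u = 1"
      and v: "v \<in> set pb" "Y v = 0" and uv: "precedes r u v" by blast
    obtain k where "k < length pa" "pa ! k = u" using u(1) by (auto simp: in_set_conv_nth)
    moreover obtain h where "h < length pb" "pb ! h = v" using v(1) by (auto simp: in_set_conv_nth)
    ultimately have "(k, h) \<in> ?S" and "p = ?f (k, h)" using p u v uv by auto
    then show "p \<in> ?f ` ?S" by blast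
  qed auto
  have "H_ab Y pa pb (length pa) (length pb) r = card ?S"
    unfolding H_ab_def by (rule arg_cong[where f = card]) auto
  also have "\<dots> = card (?f ` ?S)" using card_image[OF inj] by simp
  finally show ?thesis unfolding image .
qed

lemma delta_xAUC_eq_abs_xAUC_gap:
  "delta_xAUC Y pa pb r = \<bar>xAUC_gap Y pa pb (length pa) (length pb) r\<bar>"
  using H_ab_full disjoint_rankings.H_ab_full[OF swap]
  unfolding delta_xAUC_def xAUC_def xAUC_gap_def H_ba_eq_H_ab_swap by (simp add: mult.commute)

end

theorem mainTheorem7:
  fixes pa pb :: "'u list" and Y :: "'u \<Rightarrow> nat"
  assumes "distinct pa" and "distinct pb" and "set pa \<inter> set pb = {}"
    and "\<forall>u \<in> set pa \<union> set pb. Y u \<in> {0, 1}"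
    and "n1 Y pa \<ge> 1" and "n0 Y pa \<ge> 1" and "n1 Y pb \<ge> 1" and "n0 Y pb \<ge> 1"
  shows "is_cross_ordering pa pb (greedy_output Y pa pb) \<and>
         delta_xAUC Y pa pb (greedy_output Y pa pb)
           \<le> max (1 / real (n1 Y pa)) (1 / real (n1 Y pb))"
proof -
  interpret disjoint_rankings pa pb
    using assms(1-3) by unfold_locales
  obtain g i j where final: "(greedy_step Y pa pb ^^ (length pa + length pb)) ([], 0, 0) = (g, i, j)"
    by (metis prod.exhaust)
  then have inv: "greedy_invariant Y (length pa + length pb) (g, i, j)"
    using greedy_invariant_iterate[of "length pa + length pb" Y] by simp
  then have "i = length pa" and "j = length pb"
    unfolding greedy_invariant_def by auto
  with inv have "is_cross_ordering pa pb g"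
    and "delta_xAUC Y pa pb g \<le> max (1 / real (n1 Y pa)) (1 / real (n1 Y pb))"
    unfolding greedy_invariant_def is_cross_ordering_def delta_xAUC_eq_abs_xAUC_gap by simp_all
  moreover have "greedy_output Y pa pb = g"
    unfolding greedy_output_def final by simp
  ultimately show ?thesis by simp
qed

end
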